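(* For a $G$-space $X$, $\mathrm{cat}^{G,\infty}(X)=0$ if and only if $\mathrm{TC}^{G,\infty}(X)=0$.
   Context: All spaces are well-pointed CW complexes, $G$ a topological group acting cellularly; $x_0\in X$ is the base point. $PX$ is the path space; $\mathcal{P}_k(X)=\{(\gamma_1,\dots,\gamma_k)\in(PX)^k\mid G\gamma_i(1)=G\gamma_{i+1}(0),\ 1\le i\le k-1\}$, $\pi_k(\gamma_1,\dots,\gamma_k)=(\gamma_1(0),\gamma_k(1))\in X\times X$. $\mathrm{secat}$ is the reduced sectional category (least $n$ such that the base is covered by $n+1$ open sets each admitting a homotopy section). $\mathrm{TC}^{G,k}(X)=\mathrm{secat}(\pi_k)$, $\mathrm{TC}^{G,\infty}(X)=\min_k\mathrm{TC}^{G,k}(X)$. $P^k_*(X)=\{(\gamma_1,\dots,\gamma_k)\in\mathcal{P}_k(X)\mid\gamma_1(0)=x_0\}$, $q_k(\gamma_1,\dots,\gamma_k)=\gamma_k(1)$, $\mathrm{cat}^{G,k}(X)=\mathrm{secat}(q_k)$, $\mathrm{cat}^{G,\infty}(X)=\min_k\mathrm{cat}^{G,k}(X)$. *)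

theory Defs
  imports "HOL-Analysis.Analysis" "HOL-Library.Extended_Nat" "HOL-Algebra.Group_Action"
begin

definition top_group_action ::
  "('g, 'm) monoid_scheme \<Rightarrow> 'g topology \<Rightarrow> 'a topology \<Rightarrow> ('g \<Rightarrow> 'a \<Rightarrow> 'a) \<Rightarrow> bool" where
  "top_group_action G TG X phi \<longleftrightarrow>
     group G \<and> topspace TG = carrier G \<and>
     continuous_map (prod_topology TG TG) TG (\<lambda>(g, h). g \<otimes>\<^bsub>G\<^esub> h) \<and>
     continuous_map TG TG (\<lambda>g. inv\<^bsub>G\<^esub> g) \<and>
     group_action G (topspace X) phi \<and>
     continuous_map (prod_topology TG X) X (\<lambda>(g, x). phi g x)"

definition orbit_of :: "('g, 'm) monoid_scheme \<Rightarrow> ('g \<Rightarrow> 'a \<Rightarrow> 'a) \<Rightarrow> 'a \<Rightarrow> 'a set" where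
  "orbit_of G phi x = {phi g x | g. g \<in> carrier G}"

definition path_set :: "'a topology \<Rightarrow> (real \<Rightarrow> 'a) set" where
  "path_set X = {g. pathin X g \<and> (\<forall>t. t \<notin> {0..1} \<longrightarrow> g t = undefined)}"

definition path_space :: "'a topology \<Rightarrow> (real \<Rightarrow> 'a) topology" where
  "path_space X = topology_generated_by
     {{g \<in> path_set X. g ` K \<subseteq> U} | K U.
        compactin (top_of_set {0..1::real}) K \<and> openin X U}"

definition paths_k :: "'a topology \<Rightarrow> nat \<Rightarrow> (nat \<Rightarrow> real \<Rightarrow> 'a) topology" where
  "paths_k X k = product_topology (\<lambda>_. path_space X) {..<k}"

definition chain_cond :: "('g, 'm) monoid_scheme \<Rightarrow> ('g \<Rightarrow> 'a \<Rightarrow> 'a) \<Rightarrow> nat \<Rightarrow> (nat \<Rightarrow> real \<Rightarrow> 'a) \<Rightarrow> bool" where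
  "chain_cond G phi k \<gamma> \<longleftrightarrow>
     (\<forall>i. Suc i < k \<longrightarrow> orbit_of G phi (\<gamma> i 1) = orbit_of G phi (\<gamma> (Suc i) 0))"

definition Pk :: "('g, 'm) monoid_scheme \<Rightarrow> ('g \<Rightarrow> 'a \<Rightarrow> 'a) \<Rightarrow> 'a topology \<Rightarrow> nat \<Rightarrow> (nat \<Rightarrow> real \<Rightarrow> 'a) topology" where
  "Pk G phi X k = subtopology (paths_k X k) {\<gamma>. chain_cond G phi k \<gamma>}"

definition pik :: "nat \<Rightarrow> (nat \<Rightarrow> real \<Rightarrow> 'a) \<Rightarrow> 'a \<times> 'a" where
  "pik k \<gamma> = (\<gamma> 0 0, \<gamma> (k - 1) 1)"

definition Pk_star :: "('g, 'm) monoid_scheme \<Rightarrow> ('g \<Rightarrow> 'a \<Rightarrow> 'a) \<Rightarrow> 'a topology \<Rightarrow> 'a \<Rightarrow> nat \<Rightarrow> (nat \<Rightarrow> real \<Rightarrow> 'a) topology" where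
  "Pk_star G phi X x0 k = subtopology (paths_k X k) {\<gamma>. chain_cond G phi k \<gamma> \<and> \<gamma> 0 0 = x0}"

definition qk :: "nat \<Rightarrow> (nat \<Rightarrow> real \<Rightarrow> 'a) \<Rightarrow> 'a" where
  "qk k \<gamma> = \<gamma> (k - 1) 1"

text \<open>Reduced sectional category of p : E -> B (infinite if no finite cover exists).\<close>
definition secat :: "'e topology \<Rightarrow> 'b topology \<Rightarrow> ('e \<Rightarrow> 'b) \<Rightarrow> enat" where
  "secat E B p = Inf {enat n | n. \<exists>U :: nat \<Rightarrow> 'b set.
      (\<forall>i\<le>n. openin B (U i)) \<and> topspace B \<subseteq> (\<Union>i\<le>n. U i) \<and>
      (\<forall>i\<le>n. \<exists>s. continuous_map (subtopology B (U i)) E s \<and>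
                 homotopic_with (\<lambda>_. True) (subtopology B (U i)) B (p \<circ> s) id)}"

definition TCG_k :: "('g, 'm) monoid_scheme \<Rightarrow> ('g \<Rightarrow> 'a \<Rightarrow> 'a) \<Rightarrow> 'a topology \<Rightarrow> nat \<Rightarrow> enat" where
  "TCG_k G phi X k = secat (Pk G phi X k) (prod_topology X X) (pik k)"

definition TCG_inf :: "('g, 'm) monoid_scheme \<Rightarrow> ('g \<Rightarrow> 'a \<Rightarrow> 'a) \<Rightarrow> 'a topology \<Rightarrow> enat" where
  "TCG_inf G phi X = (INF k\<in>{1..}. TCG_k G phi X k)"

definition catG_k :: "('g, 'm) monoid_scheme \<Rightarrow> ('g \<Rightarrow> 'a \<Rightarrow> 'a) \<Rightarrow> 'a topology \<Rightarrow> 'a \<Rightarrow> nat \<Rightarrow> enat" where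
  "catG_k G phi X x0 k = secat (Pk_star G phi X x0 k) X (qk k)"

definition catG_inf :: "('g, 'm) monoid_scheme \<Rightarrow> ('g \<Rightarrow> 'a \<Rightarrow> 'a) \<Rightarrow> 'a topology \<Rightarrow> 'a \<Rightarrow> enat" where
  "catG_inf G phi X x0 = (INF k\<in>{1..}. catG_k G phi X x0 k)"

end

theory Submission
  imports Defs
begin

text \<open>Vanishing of a reduced sectional category means a global homotopy section. A section \<open>s\<close>
  of \<open>q\<^sub>k\<close> gives, for each point, a \<open>k\<close>-chain from \<open>x\<^sub>0\<close> to a point homotopic to it; running
  the chain of \<open>x\<close> backwards and then the chain of \<open>y\<close> forwards is a section of \<open>\<pi>\<^sub>2\<^sub>k\<close>.
  Conversely, restrict a section of \<open>\<pi>\<^sub>k\<close> to \<open>{x\<^sub>0} \<times> X\<close> and prepend the path from \<open>x\<^sub>0\<close>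
  traced by the deformation of \<open>\<pi>\<^sub>k \<circ> s\<close> into the identity; this is a section of \<open>q\<^sub>k\<^sub>+\<^sub>1\<close>.
  All junctions occur at equal points.\<close>

lemma topspace_path_space [simp]: "topspace (path_space X) = path_set X"
proof -
  have "path_set X \<in> {{g \<in> path_set X. g ` K \<subseteq> U} | K U.
        compactin (top_of_set {0..1::real}) K \<and> openin X U}"
    by (rule CollectI, rule exI[of _ "{}"], rule exI[of _ "topspace X"]) auto
  then show ?thesis unfolding path_space_def by auto
qed

lemma continuous_map_path_space:
  assumes "\<And>y. y \<in> topspace Y \<Longrightarrow> f y \<in> path_set X"
    and "\<And>K U. compactin (top_of_set {0..1::real}) K \<Longrightarrow> openin X U \<Longrightarrow>
          openin Y {y \<in> topspace Y. f y ` K \<subseteq> U}"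
  shows "continuous_map Y (path_space X) f"
  unfolding path_space_def
proof (rule continuous_on_generated_topo)
  show "f ` topspace Y \<subseteq> \<Union> {{g \<in> path_set X. g ` K \<subseteq> U} | K U.
        compactin (top_of_set {0..1::real}) K \<and> openin X U}"
    using topspace_path_space[of X] assms(1) unfolding path_space_def by auto
next
  fix V assume "V \<in> {{g \<in> path_set X. g ` K \<subseteq> U} | K U.
        compactin (top_of_set {0..1::real}) K \<and> openin X U}"
  then obtain K U where "compactin (top_of_set {0..1::real}) K" "openin X U"
     "V = {g \<in> path_set X. g ` K \<subseteq> U}" by auto
  moreover have "f -` {g \<in> path_set X. g ` K \<subseteq> U} \<inter> topspace Y = {y \<in> topspace Y. f y ` K \<subseteq> U}"
    using assms(1) by auto
  ultimately show "openin Y (f -` V \<inter> topspace Y)" using assms(2) by simp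
qed

definition curry_path :: "(real \<times> 'b \<Rightarrow> 'a) \<Rightarrow> 'b \<Rightarrow> real \<Rightarrow> 'a" where
  "curry_path F y = (\<lambda>t. if t \<in> {0..1} then F (t, y) else undefined)"

lemma curry_path_0 [simp]: "curry_path F y 0 = F (0, y)"
  and curry_path_1 [simp]: "curry_path F y 1 = F (1, y)"
  by (auto simp: curry_path_def)

text \<open>One half of the exponential law; the tube lemma does the work.\<close>
lemma continuous_map_curry_path:
  assumes F: "continuous_map (prod_topology (top_of_set {0..1::real}) Y) X F"
  shows "continuous_map Y (path_space X) (curry_path F)"
proof (rule continuous_map_path_space)
  fix y assume y: "y \<in> topspace Y"
  have "continuous_map (top_of_set {0..1}) X (F \<circ> (\<lambda>t. (t, y)))"
    by (intro continuous_map_compose[OF _ F] continuous_map_pairedI) (simp_all add: y)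
  then have "pathin X (curry_path F y)"
    unfolding pathin_def curry_path_def by (rule continuous_map_eq) auto
  then show "curry_path F y \<in> path_set X" unfolding path_set_def curry_path_def by auto
next
  fix K U assume K: "compactin (top_of_set {0..1::real}) K" and U: "openin X U"
  have K01: "K \<subseteq> {0..1}" using compactin_subset_topspace[OF K] by simp
  define W where "W = {z \<in> topspace (prod_topology (top_of_set {0..1::real}) Y). F z \<in> U}"
  have W: "openin (prod_topology (top_of_set {0..1::real}) Y) W"
    unfolding W_def by (rule openin_continuous_map_preimage[OF F U])
  have curry_W: "curry_path F y ` K \<subseteq> U \<longleftrightarrow> K \<times> {y} \<subseteq> W" if "y \<in> topspace Y" for y
    using that K01 by (fastforce simp: W_def curry_path_def subset_iff)
  show "openin Y {y \<in> topspace Y. curry_path F y ` K \<subseteq> U}"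
  proof (subst openin_subopen, intro ballI)
    fix y assume y: "y \<in> {y \<in> topspace Y. curry_path F y ` K \<subseteq> U}"
    then obtain A V where "openin Y V" "K \<subseteq> A" "y \<in> V" "A \<times> V \<subseteq> W"
      using tube_lemma_left[OF W K, of y] curry_W by auto
    moreover have "V \<subseteq> topspace Y" using \<open>openin Y V\<close> by (rule openin_subset)
    ultimately show "\<exists>T. openin Y T \<and> y \<in> T \<and> T \<subseteq> {y \<in> topspace Y. curry_path F y ` K \<subseteq> U}"
      using curry_W by (intro exI[of _ V]) blast
  qed
qed

lemma homotopic_with_imp_path_family:
  assumes "homotopic_with P Y X f g"
  obtains \<beta> where "continuous_map Y (path_space X) \<beta>"
    "\<And>y. \<beta> y 0 = f y" "\<And>y. \<beta> y 1 = g y"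
proof -
  obtain H where "continuous_map (prod_topology (top_of_set {0..1::real}) Y) X H"
    "\<And>y. H (0, y) = f y" "\<And>y. H (1, y) = g y"
    using assms unfolding homotopic_with_def by blast
  then show ?thesis
    by (intro that[of "curry_path H"] continuous_map_curry_path) simp_all
qed

definition reverse_path :: "(real \<Rightarrow> 'a) \<Rightarrow> real \<Rightarrow> 'a" where
  "reverse_path g = (\<lambda>t. if t \<in> {0..1} then g (1 - t) else undefined)"

lemma reverse_path_0 [simp]: "reverse_path g 0 = g 1"
  and reverse_path_1 [simp]: "reverse_path g 1 = g 0"
  by (auto simp: reverse_path_def)

lemma continuous_map_reverse_path: "continuous_map (path_space X) (path_space X) reverse_path"
proof (rule continuous_map_path_space)
  have flip: "continuous_map (top_of_set {0..1::real}) (top_of_set {0..1}) (\<lambda>t. 1 - t)"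
    by (auto simp: continuous_map_in_subtopology intro!: continuous_intros)
  {
    fix g assume "g \<in> topspace (path_space X)"
    then have "continuous_map (top_of_set {0..1}) X g" by (simp add: path_set_def pathin_def)
    then have "pathin X (reverse_path g)"
      unfolding pathin_def reverse_path_def
      by (rule continuous_map_eq[OF continuous_map_compose[OF flip]]) auto
    then show "reverse_path g \<in> path_set X" unfolding path_set_def reverse_path_def by auto
  }
  fix K U assume K: "compactin (top_of_set {0..1::real}) K" and U: "openin X U"
  have "{g \<in> topspace (path_space X). reverse_path g ` K \<subseteq> U}
      = {g \<in> path_set X. g ` ((\<lambda>t. 1 - t) ` K) \<subseteq> U}"
    using compactin_subset_topspace[OF K] by (auto simp: reverse_path_def subset_iff)
  also have "openin (path_space X) \<dots>"
    unfolding path_space_def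
    by (rule topology_generated_by_Basis) (use image_compactin[OF K flip] U in blast)
  finally show "openin (path_space X) {g \<in> topspace (path_space X). reverse_path g ` K \<subseteq> U}" .
qed

lemma continuous_map_paths_k_iff:
  "continuous_map Y (paths_k X k) f \<longleftrightarrow>
     f ` topspace Y \<subseteq> extensional {..<k} \<and> (\<forall>i<k. continuous_map Y (path_space X) (\<lambda>y. f y i))"
  by (auto simp: paths_k_def continuous_map_componentwise)

lemma continuous_map_paths_k_component:
  "continuous_map Y (paths_k X k) f \<Longrightarrow> i < k \<Longrightarrow> continuous_map Y (path_space X) (\<lambda>y. f y i)"
  by (simp add: continuous_map_paths_k_iff)

lemma continuous_map_Pk_iff:
  "continuous_map Y (Pk G phi X k) f \<longleftrightarrow>
     continuous_map Y (paths_k X k) f \<and> (\<forall>y\<in>topspace Y. chain_cond G phi k (f y))"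
  by (auto simp: Pk_def continuous_map_in_subtopology)

lemma continuous_map_Pk_star_iff:
  "continuous_map Y (Pk_star G phi X x0 k) f \<longleftrightarrow>
     continuous_map Y (paths_k X k) f \<and> (\<forall>y\<in>topspace Y. chain_cond G phi k (f y) \<and> f y 0 0 = x0)"
  by (auto simp: Pk_star_def continuous_map_in_subtopology)

definition chain_append :: "nat \<Rightarrow> (nat \<Rightarrow> 'p) \<Rightarrow> nat \<Rightarrow> (nat \<Rightarrow> 'p) \<Rightarrow> nat \<Rightarrow> 'p" where
  "chain_append m \<gamma> n \<delta> = (\<lambda>i. if i < m then \<gamma> i else if i < m + n then \<delta> (i - m) else undefined)"

definition chain_reverse :: "nat \<Rightarrow> (nat \<Rightarrow> real \<Rightarrow> 'a) \<Rightarrow> nat \<Rightarrow> real \<Rightarrow> 'a" where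
  "chain_reverse k \<gamma> = (\<lambda>i. if i < k then reverse_path (\<gamma> (k - 1 - i)) else undefined)"

lemma chain_append_first: "0 < m \<Longrightarrow> chain_append m \<gamma> n \<delta> 0 = \<gamma> 0"
  and chain_append_last: "0 < n \<Longrightarrow> chain_append m \<gamma> n \<delta> (m + n - 1) = \<delta> (n - 1)"
  by (auto simp: chain_append_def)

lemma chain_reverse_first: "0 < k \<Longrightarrow> chain_reverse k \<gamma> 0 0 = \<gamma> (k - 1) 1"
  and chain_reverse_last: "0 < k \<Longrightarrow> chain_reverse k \<gamma> (k - 1) 1 = \<gamma> 0 0"
  by (auto simp: chain_reverse_def)

lemma continuous_map_chain_append:
  assumes "\<And>i. i < m \<Longrightarrow> continuous_map Y (path_space X) (\<lambda>y. f y i)"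
    and "\<And>i. i < n \<Longrightarrow> continuous_map Y (path_space X) (\<lambda>y. g y i)"
  shows "continuous_map Y (paths_k X (m + n)) (\<lambda>y. chain_append m (f y) n (g y))"
  unfolding continuous_map_paths_k_iff
proof (intro conjI allI impI)
  fix i assume "i < m + n"
  then show "continuous_map Y (path_space X) (\<lambda>y. chain_append m (f y) n (g y) i)"
    using assms[of i] assms(2)[of "i - m"] by (auto simp: chain_append_def)
qed (auto simp: chain_append_def extensional_def)

lemma continuous_map_chain_reverse:
  assumes "continuous_map Y (paths_k X k) f"
  shows "continuous_map Y (paths_k X k) (\<lambda>y. chain_reverse k (f y))"
  unfolding continuous_map_paths_k_iff
proof (intro conjI allI impI)
  fix i assume "i < k"
  then have "continuous_map Y (path_space X) (reverse_path \<circ> (\<lambda>y. f y (k - 1 - i)))"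
    by (intro continuous_map_compose[OF _ continuous_map_reverse_path]
        continuous_map_paths_k_component[OF assms]) simp
  then show "continuous_map Y (path_space X) (\<lambda>y. chain_reverse k (f y) i)"
    using \<open>i < k\<close> by (simp add: chain_reverse_def o_def)
qed (auto simp: chain_reverse_def extensional_def)

lemma chain_cond_chain_append:
  assumes "chain_cond G phi m \<gamma>" "chain_cond G phi n \<delta>"
    and "orbit_of G phi (\<gamma> (m - 1) 1) = orbit_of G phi (\<delta> 0 0)"
  shows "chain_cond G phi (m + n) (chain_append m \<gamma> n \<delta>)"
  unfolding chain_cond_def
proof (intro allI impI)
  fix i assume i: "Suc i < m + n"
  consider "Suc i < m" | "Suc i = m" | "m \<le> i" by linarith
  then show "orbit_of G phi (chain_append m \<gamma> n \<delta> i 1) = orbit_of G phi (chain_append m \<gamma> n \<delta> (Suc i) 0)"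
  proof cases
    case 3
    then have "Suc (i - m) = Suc i - m" by simp
    with 3 i assms(2) show ?thesis by (auto simp: chain_append_def chain_cond_def)
  qed (use assms i in \<open>auto simp: chain_append_def chain_cond_def\<close>)
qed

lemma chain_cond_chain_reverse:
  assumes "chain_cond G phi k \<gamma>"
  shows "chain_cond G phi k (chain_reverse k \<gamma>)"
  unfolding chain_cond_def
proof (intro allI impI)
  fix i assume i: "Suc i < k"
  then have "orbit_of G phi (\<gamma> (k - 1 - Suc i) 1) = orbit_of G phi (\<gamma> (Suc (k - 1 - Suc i)) 0)"
    using assms by (simp add: chain_cond_def)
  moreover have "Suc (k - 1 - Suc i) = k - 1 - i" using i by simp
  ultimately show "orbit_of G phi (chain_reverse k \<gamma> i 1) = orbit_of G phi (chain_reverse k \<gamma> (Suc i) 0)"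
    using i by (simp add: chain_reverse_def)
qed

lemma Inf_enat_eq_0_iff: "Inf A = (0::enat) \<longleftrightarrow> 0 \<in> A"
proof
  assume "Inf A = 0"
  then have "A \<noteq> {}" by (auto simp: Inf_enat_def)
  then have "Inf A \<in> A" unfolding Inf_enat_def by (auto intro: LeastI)
  then show "0 \<in> A" using \<open>Inf A = 0\<close> by simp
qed (metis Inf_lower le_zero_eq)

lemma INF_enat_eq_0_iff: "(INF k\<in>K. f k) = (0::enat) \<longleftrightarrow> (\<exists>k\<in>K. f k = 0)"
  by (auto simp: Inf_enat_eq_0_iff image_iff)

lemma secat_eq_0_iff:
  "secat E B p = 0 \<longleftrightarrow> (\<exists>s. continuous_map B E s \<and> homotopic_with (\<lambda>_. True) B B (p \<circ> s) id)"
proof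
  assume "secat E B p = 0"
  then obtain U :: "nat \<Rightarrow> 'b set" where "topspace B \<subseteq> U 0"
    "\<exists>s. continuous_map (subtopology B (U 0)) E s \<and>
         homotopic_with (\<lambda>_. True) (subtopology B (U 0)) B (p \<circ> s) id"
    unfolding secat_def Inf_enat_eq_0_iff by (auto simp: zero_enat_def)
  then show "\<exists>s. continuous_map B E s \<and> homotopic_with (\<lambda>_. True) B B (p \<circ> s) id"
    by (simp add: subtopology_superset)
next
  assume "\<exists>s. continuous_map B E s \<and> homotopic_with (\<lambda>_. True) B B (p \<circ> s) id"
  then show "secat E B p = 0"
    unfolding secat_def Inf_enat_eq_0_iff
    by (auto simp: zero_enat_def intro!: exI[of _ "\<lambda>_. topspace B"])
qed

lemma TCG_k_double_eq_0:
  assumes "0 < k" and "catG_k G phi X x0 k = 0"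
  shows "TCG_k G phi X (2 * k) = 0"
proof -
  obtain s where s: "continuous_map X (Pk_star G phi X x0 k) s"
    and h: "homotopic_with (\<lambda>_. True) X X (qk k \<circ> s) id"
    using assms(2) unfolding catG_k_def secat_eq_0_iff by blast
  define S where "S z = chain_append k (chain_reverse k (s (fst z))) k (s (snd z))" for z
  have s_paths: "continuous_map X (paths_k X k) s"
    and s_chain: "\<And>x. x \<in> topspace X \<Longrightarrow> chain_cond G phi k (s x) \<and> s x 0 0 = x0"
    using s unfolding continuous_map_Pk_star_iff by auto
  have "continuous_map (prod_topology X X) (paths_k X k) (\<lambda>z. chain_reverse k (s (fst z)))"
    using continuous_map_compose[OF continuous_map_fst continuous_map_chain_reverse[OF s_paths]]
    by (simp add: o_def)
  moreover have "continuous_map (prod_topology X X) (paths_k X k) (\<lambda>z. s (snd z))"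
    using continuous_map_compose[OF continuous_map_snd s_paths] by (simp add: o_def)
  ultimately have "continuous_map (prod_topology X X) (paths_k X (k + k)) S"
    unfolding S_def by (intro continuous_map_chain_append continuous_map_paths_k_component)
  moreover have "chain_cond G phi (k + k) (S z)" if "z \<in> topspace (prod_topology X X)" for z
  proof -
    have "chain_reverse k (s (fst z)) (k - 1) 1 = s (snd z) 0 0"
      using chain_reverse_last[OF \<open>0 < k\<close>, of "s (fst z)"] that s_chain by auto
    then show ?thesis
      using that s_chain unfolding S_def
      by (intro chain_cond_chain_append chain_cond_chain_reverse) auto
  qed
  ultimately have S: "continuous_map (prod_topology X X) (Pk G phi X (2 * k)) S"
    by (simp add: continuous_map_Pk_iff mult_2)
  have "homotopic_with (\<lambda>_. True) (prod_topology X X) (prod_topology X X)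
     (\<lambda>z. ((qk k \<circ> s) (fst z), (qk k \<circ> s) (snd z))) (\<lambda>z. (id (fst z), id (snd z)))"
    by (rule homotopic_with_prod_topology[OF h h]) auto
  then have "homotopic_with (\<lambda>_. True) (prod_topology X X) (prod_topology X X) (pik (2 * k) \<circ> S) id"
    by (rule homotopic_with_eq)
       (use \<open>0 < k\<close> in \<open>auto simp: S_def pik_def qk_def mult_2 chain_append_first chain_reverse_first
         chain_append_last[where m = k and n = k, simplified]\<close>)
  with S show ?thesis
    unfolding TCG_k_def secat_eq_0_iff by blast
qed

lemma catG_k_Suc_eq_0:
  assumes "0 < k" and "x0 \<in> topspace X" and "TCG_k G phi X k = 0"
  shows "catG_k G phi X x0 (Suc k) = 0"
proof -
  obtain s where s: "continuous_map (prod_topology X X) (Pk G phi X k) s"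
    and h: "homotopic_with (\<lambda>_. True) (prod_topology X X) (prod_topology X X) (pik k \<circ> s) id"
    using assms(3) unfolding TCG_k_def secat_eq_0_iff by blast
  have j: "continuous_map X (prod_topology X X) (\<lambda>y. (x0, y))"
    by (rule continuous_map_pairedI) (simp_all add: assms(2))
  have hj: "homotopic_with (\<lambda>_. True) X (prod_topology X X) (pik k \<circ> s \<circ> (\<lambda>y. (x0, y))) (\<lambda>y. (x0, y))"
    using homotopic_with_compose_continuous_map_right[OF h j] by (simp add: o_def)
  have "homotopic_with (\<lambda>_. True) X X (\<lambda>y. x0) (\<lambda>y. s (x0, y) 0 0)"
    using homotopic_with_compose_continuous_map_left[OF hj continuous_map_fst]
    by (auto simp: o_def pik_def intro: homotopic_with_symD)
  then obtain \<beta> where \<beta>: "continuous_map X (path_space X) \<beta>"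
    and \<beta>_0: "\<And>y. \<beta> y 0 = x0" and \<beta>_1: "\<And>y. \<beta> y 1 = s (x0, y) 0 0"
    by (rule homotopic_with_imp_path_family) blast
  define s' where "s' y = chain_append 1 (\<lambda>_. \<beta> y) k (s (x0, y))" for y
  have s_paths: "continuous_map X (paths_k X k) (\<lambda>y. s (x0, y))"
    and s_chain: "\<And>y. y \<in> topspace X \<Longrightarrow> chain_cond G phi k (s (x0, y))"
    using continuous_map_compose[OF j s] assms(2) by (auto simp: continuous_map_Pk_iff o_def)
  have "continuous_map X (paths_k X (Suc k)) s'"
    unfolding s'_def
    using continuous_map_chain_append[of 1 X X "\<lambda>y _. \<beta> y" k "\<lambda>y. s (x0, y)"] \<beta>
      continuous_map_paths_k_component[OF s_paths]
    by simp
  moreover have "chain_cond G phi (Suc k) (s' y) \<and> s' y 0 0 = x0" if "y \<in> topspace X" for y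
    using chain_cond_chain_append[of G phi 1 "\<lambda>_. \<beta> y" k "s (x0, y)"] s_chain[OF that]
    by (simp add: s'_def \<beta>_0 \<beta>_1 chain_cond_def chain_append_first)
  ultimately have s': "continuous_map X (Pk_star G phi X x0 (Suc k)) s'"
    by (simp add: continuous_map_Pk_star_iff)
  have "homotopic_with (\<lambda>_. True) X X (snd \<circ> (pik k \<circ> s \<circ> (\<lambda>y. (x0, y)))) (snd \<circ> (\<lambda>y. (x0, y)))"
    by (rule homotopic_with_compose_continuous_map_left[OF hj continuous_map_snd]) auto
  then have "homotopic_with (\<lambda>_. True) X X (qk (Suc k) \<circ> s') id"
    by (rule homotopic_with_eq)
       (use \<open>0 < k\<close> in \<open>auto simp: s'_def qk_def pik_def chain_append_last[where m = 1, simplified]\<close>)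
  with s' show ?thesis
    unfolding catG_k_def secat_eq_0_iff by blast
qed

theorem mainTheorem7:
  fixes G :: "('g, 'm) monoid_scheme" and TG :: "'g topology"
    and X :: "'a topology" and phi :: "'g \<Rightarrow> 'a \<Rightarrow> 'a" and x0 :: 'a
  assumes "top_group_action G TG X phi"
    and "x0 \<in> topspace X"
  shows "catG_inf G phi X x0 = 0 \<longleftrightarrow> TCG_inf G phi X = 0"
proof
  assume "catG_inf G phi X x0 = 0"
  then obtain k where "k \<ge> 1" "catG_k G phi X x0 k = 0"
    unfolding catG_inf_def INF_enat_eq_0_iff by auto
  then have "TCG_k G phi X (2 * k) = 0" by (intro TCG_k_double_eq_0) auto
  with \<open>k \<ge> 1\<close> show "TCG_inf G phi X = 0"
    unfolding TCG_inf_def INF_enat_eq_0_iff by (intro bexI[of _ "2 * k"]) auto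
next
  assume "TCG_inf G phi X = 0"
  then obtain k where "k \<ge> 1" "TCG_k G phi X k = 0"
    unfolding TCG_inf_def INF_enat_eq_0_iff by auto
  then have "catG_k G phi X x0 (Suc k) = 0" by (intro catG_k_Suc_eq_0 assms(2)) auto
  then show "catG_inf G phi X x0 = 0"
    unfolding catG_inf_def INF_enat_eq_0_iff by (intro bexI[of _ "Suc k"]) auto
qed

end
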